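(* Let $H=(\mathcal{V},\mathcal{E})$ be a hypergraph, $t:\mathcal{E}\to\mathcal{V}$ a representative function with image $R$, and let $C$ be a proper vertex colouring of the co-occurrence graph $G_{R,t}$ with positive colours. Then $C$ (with all vertices of $\mathcal{V}\setminus R$ receiving colour $0$) is a conflict-free colouring of $H$. Moreover, $\chi_{cf}(H)\leq\chi_{min}$.
   Context: Hyperedges of $H$ are nonempty subsets of the finite set $\mathcal{V}$. A conflict-free colouring of $H$ is a function $C:\mathcal{V}\to\{0,1,2,\dots\}$ such that every hyperedge $E$ contains a colour $j\geq1$ with $|E\cap C^{-1}(j)|=1$; $\chi_{cf}(H)$ is the minimum number of non-zero colours in such a colouring. A representative function is a map $t:\mathcal{E}\to\mathcal{V}$ with $t(E)\in E$; $R=t(\mathcal{E})$. The co-occurrence graph $G_{R,t}$ has vertex set $R$, with distinct $u,v$ adjacent iff some $E\in\mathcal{E}$ has $u,v\in E$ and $t(E)\in\{u,v\}$. $\chi_{min}$ is the minimum of the chromatic number $\chi(G_{R,t})$ over all representative functions $t$. *)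

theory Defs
  imports Main
begin

definition hypergraph :: "'a set \<Rightarrow> 'a set set \<Rightarrow> bool" where
  "hypergraph V E \<longleftrightarrow> finite V \<and> (\<forall>e\<in>E. e \<noteq> {} \<and> e \<subseteq> V)"

text \<open>Conflict-free colouring (colour 0 means uncoloured).\<close>
definition conflict_free :: "'a set set \<Rightarrow> ('a \<Rightarrow> nat) \<Rightarrow> bool" where
  "conflict_free E C \<longleftrightarrow> (\<forall>e\<in>E. \<exists>j\<ge>1. card (e \<inter> {v. C v = j}) = 1)"

definition chi_cf :: "'a set \<Rightarrow> 'a set set \<Rightarrow> nat" where
  "chi_cf V E = (LEAST k. \<exists>C. conflict_free E C \<and> card (C ` V - {0}) = k)"

definition representative :: "'a set set \<Rightarrow> ('a set \<Rightarrow> 'a) \<Rightarrow> bool" where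
  "representative E t \<longleftrightarrow> (\<forall>e\<in>E. t e \<in> e)"

definition cooc_adj :: "'a set set \<Rightarrow> ('a set \<Rightarrow> 'a) \<Rightarrow> 'a \<Rightarrow> 'a \<Rightarrow> bool" where
  "cooc_adj E t u v \<longleftrightarrow> u \<in> t ` E \<and> v \<in> t ` E \<and> u \<noteq> v \<and>
     (\<exists>e\<in>E. u \<in> e \<and> v \<in> e \<and> (t e = u \<or> t e = v))"

definition proper_pos_colouring :: "'a set \<Rightarrow> ('a \<Rightarrow> 'a \<Rightarrow> bool) \<Rightarrow> ('a \<Rightarrow> nat) \<Rightarrow> bool" where
  "proper_pos_colouring W adj C \<longleftrightarrow>
     (\<forall>v\<in>W. C v \<ge> 1) \<and> (\<forall>u\<in>W. \<forall>v\<in>W. adj u v \<longrightarrow> C u \<noteq> C v)"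

definition chromatic_number :: "'a set \<Rightarrow> ('a \<Rightarrow> 'a \<Rightarrow> bool) \<Rightarrow> nat" where
  "chromatic_number W adj = (LEAST k. \<exists>C. proper_pos_colouring W adj C \<and> C ` W \<subseteq> {1..k})"

definition chi_min :: "'a set set \<Rightarrow> nat" where
  "chi_min E = (LEAST k. \<exists>t. representative E t \<and> chromatic_number (t ` E) (cooc_adj E t) = k)"

end

theory Submission
  imports Defs
begin

text \<open>The representative of a hyperedge is adjacent in the co-occurrence graph to every
  other coloured vertex of that hyperedge, so it is the unique vertex of its colour there.
  Applied to a representative function attaining \<open>chi_min\<close> and an optimal colouring of its
  co-occurrence graph, this yields a conflict-free colouring with at most \<open>chi_min\<close> non-zero
  colours.\<close>

lemma conflict_free_of_proper_cooc_colouring: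
  assumes "representative E t"
    and "proper_pos_colouring (t ` E) (cooc_adj E t) C"
  shows "conflict_free E (\<lambda>v. if v \<in> t ` E then C v else 0)"
  unfolding conflict_free_def
proof
  fix e assume e: "e \<in> E"
  let ?C = "\<lambda>v. if v \<in> t ` E then C v else 0"
  have te: "t e \<in> e" using assms(1) e unfolding representative_def by blast
  have tE: "t e \<in> t ` E" using e by blast
  have pos: "C (t e) \<ge> 1" using assms(2) tE unfolding proper_pos_colouring_def by blast
  have "e \<inter> {v. ?C v = C (t e)} = {t e}"
  proof (intro set_eqI iffI)
    fix u assume u: "u \<in> e \<inter> {v. ?C v = C (t e)}"
    show "u \<in> {t e}"
    proof (rule ccontr)
      assume ne: "u \<notin> {t e}"
      have uE: "u \<in> t ` E" using u pos by (auto split: if_splits)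
      have "cooc_adj E t u (t e)" unfolding cooc_adj_def using uE tE ne u te e by blast
      then have "C u \<noteq> C (t e)" using assms(2) uE tE unfolding proper_pos_colouring_def by blast
      then show False using u uE by auto
    qed
  qed (use te tE in auto)
  then show "\<exists>j\<ge>1. card (e \<inter> {v. ?C v = j}) = 1" using pos by (intro exI[of _ "C (t e)"]) auto
qed

lemma proper_pos_colouring_injective:
  assumes "finite W" and irrefl: "\<And>u. \<not> adj u u"
  shows "\<exists>C. proper_pos_colouring W adj C \<and> C ` W \<subseteq> {1..card W}"
proof -
  obtain h where h: "bij_betw h W {0..<card W}"
    using ex_bij_betw_finite_nat[OF \<open>finite W\<close>] by blast
  have "proper_pos_colouring W adj (\<lambda>v. h v + 1)"
    unfolding proper_pos_colouring_def using h irrefl by (auto simp: bij_betw_def inj_on_def)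
  moreover have "(\<lambda>v. h v + 1) ` W \<subseteq> {1..card W}"
    using h by (force simp: bij_betw_def Suc_le_eq)
  ultimately show ?thesis by blast
qed

lemma chromatic_number_attained:
  assumes "finite W" and "\<And>u. \<not> adj u u"
  shows "\<exists>C. proper_pos_colouring W adj C \<and> C ` W \<subseteq> {1..chromatic_number W adj}"
  unfolding chromatic_number_def
  by (rule LeastI_ex) (use proper_pos_colouring_injective[of W adj] assms in blast)

lemma chi_min_attained:
  assumes "representative E t"
  shows "\<exists>t. representative E t \<and> chromatic_number (t ` E) (cooc_adj E t) = chi_min E"
  unfolding chi_min_def by (rule LeastI_ex) (use assms in blast)

lemma chi_cf_le_card_colours:
  assumes "conflict_free E C"
  shows "chi_cf V E \<le> card (C ` V - {0})"
  unfolding chi_cf_def by (rule Least_le) (use assms in blast)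

lemma finite_hyperedges: "hypergraph V E \<Longrightarrow> finite E"
  unfolding hypergraph_def by (meson Pow_iff finite_Pow_iff finite_subset subsetI)

theorem lemma1:
  fixes V :: "'a set" and E :: "'a set set" and t :: "'a set \<Rightarrow> 'a" and C :: "'a \<Rightarrow> nat"
  assumes "hypergraph V E"
    and "representative E t"
    and "proper_pos_colouring (t ` E) (cooc_adj E t) C"
  shows "conflict_free E (\<lambda>v. if v \<in> t ` E then C v else 0) \<and> chi_cf V E \<le> chi_min E"
proof
  show "conflict_free E (\<lambda>v. if v \<in> t ` E then C v else 0)"
    using conflict_free_of_proper_cooc_colouring assms(2,3) .
  obtain t0 where t0: "representative E t0"
    and k0: "chromatic_number (t0 ` E) (cooc_adj E t0) = chi_min E"
    using chi_min_attained[OF assms(2)] by blast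
  have "finite (t0 ` E)" using finite_hyperedges[OF assms(1)] by blast
  then obtain C0 where C0: "proper_pos_colouring (t0 ` E) (cooc_adj E t0) C0"
    and range: "C0 ` t0 ` E \<subseteq> {1..chi_min E}"
    using chromatic_number_attained[of "t0 ` E" "cooc_adj E t0"] k0
    by (auto simp: cooc_adj_def)
  let ?C = "\<lambda>v. if v \<in> t0 ` E then C0 v else 0"
  have "chi_cf V E \<le> card (?C ` V - {0})"
    using chi_cf_le_card_colours conflict_free_of_proper_cooc_colouring[OF t0 C0] .
  also have "\<dots> \<le> chi_min E"
    using card_mono[of "{1..chi_min E}" "?C ` V - {0}"] range by auto
  finally show "chi_cf V E \<le> chi_min E" .
qed

end
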